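(* Let $Y=M(b;(a_1,b_1),\dots,(a_k,b_k))$, $k\ge3$, be a negative-definite Seifert manifold which is a $\mathbb Z/2\mathbb Z$-homology sphere, and assume that the class $g_0$ of the central node is trivial in $H=H_1(Y;\mathbb Z)$. Then at most $2^k$ of the series $\widehat Z_b(q)$, $b$ ranging over the spin$^c$ structures of $Y$, are nonzero.
   Context: Seifert data: $b\in\mathbb Z$, pairs $(a_i,b_i)$ with $0<b_i<a_i$, $\gcd(a_i,b_i)=1$; $Y$ is the plumbed manifold of the star-shaped tree with central node $v_0$ of framing $-b$ and $k$ legs whose framings $-c^{(j)}_1,\dots,-c^{(j)}_{n_j}$ ($c^{(j)}_i\ge2$) come from the continued fraction $a_j/b_j=c^{(j)}_1-1/(c^{(j)}_2-\cdots-1/c^{(j)}_{n_j})$. The plumbing matrix $M$ ($s$ vertices; diagonal = framings, $1$ for adjacent vertices, else $0$) is negative definite; $H\cong\mathbb Z^s/M\mathbb Z^s$, and $g_0$ is the class of the basis vector of $v_0$. Spin$^c$ structures are cosets $b\in(2\mathbb Z^s+\vec\delta)/2M\mathbb Z^s$ ($\vec\delta$ = vector of vertex degrees $\delta_v$). With $\mathrm{s.e.}\prod_v(z_v-z_v^{-1})^{2-\delta_v}=\sum_{\vec l}c_{\vec l}\vec z^{\,\vec l}$ (symmetric expansion: average of Laurent expansions about $z=0$ and $z=\infty$ of each factor), $\widehat Z_b(q)=q^{(-3s-\mathrm{Tr}M)/4}\sum_{\vec l\in b}c_{\vec l}\,q^{-(\vec l,M^{-1}\vec l)/4}$. *)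

theory Defs
  imports Complex_Main "HOL-Computational_Algebra.Formal_Laurent_Series"
begin

fun hj_val :: "int list \<Rightarrow> rat" where
  "hj_val [] = 0"
| "hj_val [c] = of_int c"
| "hj_val (c # cs) = of_int c - 1 / hj_val cs"

text \<open>Vertices: the central node v0 = (0,0), and for leg j (1 \<le> j \<le> k) the
  vertices (j,1), ..., (j,n_j), where (j,1) is adjacent to v0 and (j,i) to (j,i+1).\<close>
definition sf_verts :: "nat \<Rightarrow> (nat \<Rightarrow> int list) \<Rightarrow> (nat \<times> nat) set" where
  "sf_verts k cs = {(0,0)} \<union> {(j,i). j \<in> {1..k} \<and> i \<in> {1..length (cs j)}}"

definition sf_adj :: "nat \<Rightarrow> (nat \<Rightarrow> int list) \<Rightarrow> nat \<times> nat \<Rightarrow> nat \<times> nat \<Rightarrow> bool" where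
  "sf_adj k cs v w \<longleftrightarrow> v \<in> sf_verts k cs \<and> w \<in> sf_verts k cs \<and>
     ((v = (0,0) \<and> (\<exists>j\<in>{1..k}. w = (j,1))) \<or> (w = (0,0) \<and> (\<exists>j\<in>{1..k}. v = (j,1))) \<or>
      (\<exists>j i. j \<ge> 1 \<and> i \<ge> 1 \<and> ((v = (j,i) \<and> w = (j,Suc i)) \<or> (w = (j,i) \<and> v = (j,Suc i)))))"

definition sf_framing :: "int \<Rightarrow> (nat \<Rightarrow> int list) \<Rightarrow> nat \<times> nat \<Rightarrow> int" where
  "sf_framing b cs v = (if v = (0,0) then - b else - (cs (fst v) ! (snd v - 1)))"

definition sf_mat :: "int \<Rightarrow> nat \<Rightarrow> (nat \<Rightarrow> int list) \<Rightarrow> nat \<times> nat \<Rightarrow> nat \<times> nat \<Rightarrow> int" where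
  "sf_mat b k cs v w =
     (if v \<in> sf_verts k cs \<and> w \<in> sf_verts k cs then
        (if v = w then sf_framing b cs v else if sf_adj k cs v w then 1 else 0)
      else 0)"

definition sf_deg :: "nat \<Rightarrow> (nat \<Rightarrow> int list) \<Rightarrow> nat \<times> nat \<Rightarrow> int" where
  "sf_deg k cs v = int (card {w \<in> sf_verts k cs. sf_adj k cs v w})"

definition lat :: "'v set \<Rightarrow> ('v \<Rightarrow> int) set" where
  "lat V = {x. \<forall>v. v \<notin> V \<longrightarrow> x v = 0}"

definition mvec :: "'v set \<Rightarrow> ('v \<Rightarrow> 'v \<Rightarrow> int) \<Rightarrow> ('v \<Rightarrow> int) \<Rightarrow> 'v \<Rightarrow> int" where
  "mvec V M x = (\<lambda>v. if v \<in> V then (\<Sum>w\<in>V. M v w * x w) else 0)"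

definition neg_definite :: "'v set \<Rightarrow> ('v \<Rightarrow> 'v \<Rightarrow> int) \<Rightarrow> bool" where
  "neg_definite V M \<longleftrightarrow> (\<forall>x :: 'v \<Rightarrow> real. (\<forall>v. v \<notin> V \<longrightarrow> x v = 0) \<and> x \<noteq> (\<lambda>_. 0) \<longrightarrow>
      (\<Sum>v\<in>V. \<Sum>w\<in>V. x v * of_int (M v w) * x w) < 0)"

text \<open>H = Z^V / M Z^V.  Y is a Z/2-homology sphere iff H_1(Y;Z/2) = H/2H = 0.\<close>
definition Z2_homology_sphere :: "'v set \<Rightarrow> ('v \<Rightarrow> 'v \<Rightarrow> int) \<Rightarrow> bool" where
  "Z2_homology_sphere V M \<longleftrightarrow>
     (\<forall>x\<in>lat V. \<exists>y\<in>lat V. \<exists>z\<in>lat V. x = (\<lambda>v. 2 * y v + mvec V M z v))"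

definition class_trivial :: "'v set \<Rightarrow> ('v \<Rightarrow> 'v \<Rightarrow> int) \<Rightarrow> 'v \<Rightarrow> bool" where
  "class_trivial V M u \<longleftrightarrow> (\<exists>z\<in>lat V. mvec V M z = (\<lambda>v. if v = u then 1 else 0))"

definition spinc :: "'v set \<Rightarrow> ('v \<Rightarrow> 'v \<Rightarrow> int) \<Rightarrow> ('v \<Rightarrow> int) \<Rightarrow> ('v \<Rightarrow> int) set set" where
  "spinc V M \<delta> = {{(\<lambda>v. l0 v + 2 * mvec V M y v) | y. y \<in> lat V} | l0.
       l0 \<in> lat V \<and> (\<forall>v\<in>V. even (l0 v - \<delta> v))}"

text \<open>(l, M^{-1} l), computed through the rational solution u of M u = l.\<close>
definition qform :: "'v set \<Rightarrow> ('v \<Rightarrow> 'v \<Rightarrow> int) \<Rightarrow> ('v \<Rightarrow> int) \<Rightarrow> rat" where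
  "qform V M l = (let u = (THE u :: 'v \<Rightarrow> rat. (\<forall>v. v \<notin> V \<longrightarrow> u v = 0) \<and>
                      (\<forall>v\<in>V. (\<Sum>w\<in>V. of_int (M v w) * u w) = of_int (l v)))
                  in (\<Sum>v\<in>V. of_int (l v) * u v))"

text \<open>Coefficient of z^n in the symmetric expansion of (z - z^{-1})^m: average of the
  Laurent expansion about z = 0 and the expansion about z = \<infinity> (in w = 1/z).\<close>
definition sym_exp_coeff :: "int \<Rightarrow> int \<Rightarrow> rat" where
  "sym_exp_coeff m n =
     (fls_nth ((fls_X - fls_X_inv :: rat fls) powi m) n
      + fls_nth ((fls_X_inv - fls_X :: rat fls) powi m) (- n)) / 2"

definition zcoef :: "'v set \<Rightarrow> ('v \<Rightarrow> int) \<Rightarrow> ('v \<Rightarrow> int) \<Rightarrow> rat" where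
  "zcoef V \<delta> l = (\<Prod>v\<in>V. sym_exp_coeff (2 - \<delta> v) (l v))"

text \<open>The q-series Zhat_b(q), represented by its coefficient function on rational
  exponents: Zhat_b(q) = \<Sum>_e (Zhat V M \<delta> B e) q^e.\<close>
definition Zhat :: "'v set \<Rightarrow> ('v \<Rightarrow> 'v \<Rightarrow> int) \<Rightarrow> ('v \<Rightarrow> int) \<Rightarrow> ('v \<Rightarrow> int) set \<Rightarrow> rat \<Rightarrow> rat" where
  "Zhat V M \<delta> B e =
     (\<Sum>l\<in>{l\<in>B. (- 3 * of_nat (card V) - of_int (\<Sum>v\<in>V. M v v)) / 4 - qform V M l / 4 = e}.
        zcoef V \<delta> l)"

end

theory Submission
  imports Defs
begin

text \<open>A spin^c structure with \<open>\<widehat>Z\<^sub>b \<noteq> 0\<close> contains a vector \<open>l\<close> with \<open>c\<^sub>l \<noteq> 0\<close>. In the symmetric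
  expansion a vertex of degree 2 contributes the factor 1 and a vertex of degree 1 the factor
  \<open>z - z\<inverse>\<close>, so such an \<open>l\<close> vanishes on the inner vertices of the legs and is \<open>\<plusminus>1\<close> at their
  \<open>k\<close> ends. Only \<open>l(v\<^sub>0)\<close> is left free, and its parity is fixed by the spin^c condition.
  Since \<open>g\<^sub>0 = 0\<close> in \<open>H\<close>, the vector \<open>2 e\<^sub>v\<^sub>0\<close> lies in \<open>2 M \<int>\<^sup>s\<close>, so \<open>l(v\<^sub>0)\<close> can be changed by any
  even number without leaving the spin^c structure. Hence a nonvanishing \<open>\<widehat>Z\<^sub>b\<close> determines \<open>b\<close>
  through a sign vector in \<open>{\<plusminus>1}\<^sup>k\<close>.\<close>

lemma sym_exp_coeff_0_nonzero: "sym_exp_coeff 0 n \<noteq> 0 \<Longrightarrow> n = 0"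
  by (auto simp: sym_exp_coeff_def split: if_splits)

lemma sym_exp_coeff_1_nonzero: "sym_exp_coeff 1 n \<noteq> 0 \<Longrightarrow> n = 1 \<or> n = -1"
  by (auto simp: sym_exp_coeff_def split: if_splits)

lemma zcoef_nonzero_imp_sym_exp_coeff_nonzero:
  assumes "finite V" "zcoef V \<delta> l \<noteq> 0" "v \<in> V"
  shows "sym_exp_coeff (2 - \<delta> v) (l v) \<noteq> 0"
  using assms by (auto simp: zcoef_def)

lemma Zhat_nonzero_imp_zcoef_nonzero:
  assumes "Zhat V M \<delta> B \<noteq> (\<lambda>_. 0)"
  obtains l where "l \<in> B" "zcoef V \<delta> l \<noteq> 0"
proof -
  from assms obtain e where "Zhat V M \<delta> B e \<noteq> 0" by auto
  then show thesis
    unfolding Zhat_def using sum.not_neutral_contains_not_neutral that by blast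
qed

lemma mvec_add: "mvec V M (\<lambda>w. x w + y w) = (\<lambda>v. mvec V M x v + mvec V M y v)"
  by (auto simp: mvec_def sum.distrib algebra_simps)

lemma mvec_diff: "mvec V M (\<lambda>w. x w - y w) = (\<lambda>v. mvec V M x v - mvec V M y v)"
  by (auto simp: mvec_def sum_subtractf algebra_simps)

lemma mvec_smult: "mvec V M (\<lambda>w. c * x w) = (\<lambda>v. c * mvec V M x v)"
  by (auto simp: mvec_def sum_distrib_left algebra_simps)

definition spinc_coset :: "'v set \<Rightarrow> ('v \<Rightarrow> 'v \<Rightarrow> int) \<Rightarrow> ('v \<Rightarrow> int) \<Rightarrow> ('v \<Rightarrow> int) set" where
  "spinc_coset V M l = {(\<lambda>v. l v + 2 * mvec V M y v) | y. y \<in> lat V}"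

lemma spinc_coset_shift:
  assumes "z \<in> lat V"
  shows "spinc_coset V M (\<lambda>v. l v + 2 * mvec V M z v) = spinc_coset V M l"
proof
  show "spinc_coset V M (\<lambda>v. l v + 2 * mvec V M z v) \<subseteq> spinc_coset V M l"
  proof
    fix x assume "x \<in> spinc_coset V M (\<lambda>v. l v + 2 * mvec V M z v)"
    then obtain y where y: "y \<in> lat V" "x = (\<lambda>v. l v + 2 * mvec V M z v + 2 * mvec V M y v)"
      by (auto simp: spinc_coset_def)
    then have "x = (\<lambda>v. l v + 2 * mvec V M (\<lambda>w. z w + y w) v)"
      by (simp add: mvec_add algebra_simps)
    moreover have "(\<lambda>w. z w + y w) \<in> lat V"
      using y assms by (auto simp: lat_def)
    ultimately show "x \<in> spinc_coset V M l"
      by (auto simp: spinc_coset_def)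
  qed
  show "spinc_coset V M l \<subseteq> spinc_coset V M (\<lambda>v. l v + 2 * mvec V M z v)"
  proof
    fix x assume "x \<in> spinc_coset V M l"
    then obtain y where y: "y \<in> lat V" "x = (\<lambda>v. l v + 2 * mvec V M y v)"
      by (auto simp: spinc_coset_def)
    then have "x = (\<lambda>v. l v + 2 * mvec V M z v + 2 * mvec V M (\<lambda>w. y w - z w) v)"
      by (simp add: mvec_diff algebra_simps)
    moreover have "(\<lambda>w. y w - z w) \<in> lat V"
      using y assms by (auto simp: lat_def)
    ultimately show "x \<in> spinc_coset V M (\<lambda>v. l v + 2 * mvec V M z v)"
      by (auto simp: spinc_coset_def)
  qed
qed

lemma spinc_eq_spinc_coset:
  assumes "B \<in> spinc V M \<delta>" "l \<in> B"
  shows "B = spinc_coset V M l" "l \<in> lat V" "\<forall>v\<in>V. even (l v - \<delta> v)"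
proof -
  obtain l0 where l0: "l0 \<in> lat V" "\<forall>v\<in>V. even (l0 v - \<delta> v)" "B = spinc_coset V M l0"
    using assms(1) by (auto simp: spinc_def spinc_coset_def)
  then obtain y where y: "y \<in> lat V" "l = (\<lambda>v. l0 v + 2 * mvec V M y v)"
    using assms(2) by (auto simp: spinc_coset_def)
  show "B = spinc_coset V M l"
    using y l0 spinc_coset_shift by metis
  show "l \<in> lat V"
    using y l0 by (auto simp: lat_def mvec_def)
  show "\<forall>v\<in>V. even (l v - \<delta> v)"
    using y l0(2) by (auto simp: algebra_simps)
qed

lemma spinc_eq_if_agree_off_trivial_class:
  assumes triv: "class_trivial V M u" and "u \<in> V"
    and B1: "B1 \<in> spinc V M \<delta>" "l1 \<in> B1"
    and B2: "B2 \<in> spinc V M \<delta>" "l2 \<in> B2"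
    and agree: "\<And>v. v \<noteq> u \<Longrightarrow> l1 v = l2 v"
  shows "B1 = B2"
proof -
  note c1 = spinc_eq_spinc_coset[OF B1] and c2 = spinc_eq_spinc_coset[OF B2]
  have "even ((l2 u - \<delta> u) - (l1 u - \<delta> u))"
    using c1(3) c2(3) \<open>u \<in> V\<close> by (meson dvd_diff)
  then have "even (l2 u - l1 u)"
    by simp
  then obtain t where t: "l2 u - l1 u = 2 * t"
    by blast
  obtain z where z: "z \<in> lat V" "mvec V M z = (\<lambda>v. if v = u then 1 else 0)"
    using triv unfolding class_trivial_def by blast
  have "l2 = (\<lambda>v. l1 v + 2 * mvec V M (\<lambda>w. t * z w) v)"
    using agree t by (auto simp: mvec_smult z(2))
  moreover have "(\<lambda>w. t * z w) \<in> lat V"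
    using z(1) by (auto simp: lat_def)
  ultimately have "spinc_coset V M l2 = spinc_coset V M l1"
    using spinc_coset_shift by metis
  then show "B1 = B2"
    using c1(1) c2(1) by simp
qed

lemma finite_sf_verts: "finite (sf_verts k cs)"
proof -
  have "sf_verts k cs = {(0,0)} \<union> Sigma {1..k} (\<lambda>j. {1..length (cs j)})"
    by (auto simp: sf_verts_def)
  then show ?thesis
    by simp
qed

lemma sf_neighbours_leg:
  assumes "j \<in> {1..k}" "1 \<le> i" "i \<le> length (cs j)"
  shows "{w \<in> sf_verts k cs. sf_adj k cs (j,i) w} =
     (if i < length (cs j) then {if i = 1 then (0,0) else (j, i - 1), (j, Suc i)}
      else {if i = 1 then (0,0) else (j, i - 1)})"
  using assms
  apply (auto simp: sf_adj_def sf_verts_def split: if_splits)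
   apply (rule_tac x=j in exI, simp, rule_tac x="i - 1" in exI, simp)
  apply (rule_tac x=j in exI, simp, rule_tac x="length (cs j) - 1" in exI, arith)
  done

lemma sf_deg_leg:
  assumes "j \<in> {1..k}" "1 \<le> i" "i \<le> length (cs j)"
  shows "sf_deg k cs (j,i) = (if i < length (cs j) then 2 else 1)"
  unfolding sf_deg_def sf_neighbours_leg[of j k i cs, OF assms] by auto

definition sf_leg_ends :: "nat \<Rightarrow> (nat \<Rightarrow> int list) \<Rightarrow> (nat \<times> nat) set" where
  "sf_leg_ends k cs = (\<lambda>j. (j, length (cs j))) ` {1..k}"

lemma card_sf_leg_ends: "card (sf_leg_ends k cs) = k"
  unfolding sf_leg_ends_def by (subst card_image) (auto simp: inj_on_def)

lemma sf_leg_ends_subset: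
  assumes "\<forall>j\<in>{1..k}. cs j \<noteq> []"
  shows "sf_leg_ends k cs \<subseteq> sf_verts k cs - {(0,0)}"
  using assms unfolding sf_leg_ends_def sf_verts_def by (auto simp: Suc_le_eq)

lemma zcoef_sf_nonzero_imp:
  assumes "zcoef (sf_verts k cs) (sf_deg k cs) l \<noteq> 0"
    and "v \<in> sf_verts k cs" "v \<noteq> (0,0)"
  shows "(v \<in> sf_leg_ends k cs \<longrightarrow> l v = 1 \<or> l v = -1) \<and>
         (v \<notin> sf_leg_ends k cs \<longrightarrow> l v = 0)"
proof -
  obtain j i where ji: "v = (j,i)" "j \<in> {1..k}" "1 \<le> i" "i \<le> length (cs j)"
    using assms(2,3) by (auto simp: sf_verts_def)
  have "sym_exp_coeff (2 - sf_deg k cs v) (l v) \<noteq> 0"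
    using zcoef_nonzero_imp_sym_exp_coeff_nonzero[OF finite_sf_verts assms(1,2)] .
  then have s: "sym_exp_coeff (if i < length (cs j) then 0 else 1) (l v) \<noteq> 0"
    using sf_deg_leg[of j k i cs, OF ji(2-4)] ji(1) by (auto split: if_splits)
  show ?thesis
  proof (cases "i < length (cs j)")
    case True
    then have "v \<notin> sf_leg_ends k cs"
      using ji by (auto simp: sf_leg_ends_def)
    with True s sym_exp_coeff_0_nonzero show ?thesis
      by auto
  next
    case False
    then have "v \<in> sf_leg_ends k cs"
      using ji by (force simp: sf_leg_ends_def)
    with False s sym_exp_coeff_1_nonzero show ?thesis
      by auto
  qed
qed

lemma sf_spinc_determined_by_leg_ends:
  assumes triv: "class_trivial (sf_verts k cs) M (0,0)"
    and B1: "B1 \<in> spinc (sf_verts k cs) M (sf_deg k cs)" "l1 \<in> B1"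
      "zcoef (sf_verts k cs) (sf_deg k cs) l1 \<noteq> 0"
    and B2: "B2 \<in> spinc (sf_verts k cs) M (sf_deg k cs)" "l2 \<in> B2"
      "zcoef (sf_verts k cs) (sf_deg k cs) l2 \<noteq> 0"
    and ends: "\<forall>v\<in>sf_leg_ends k cs. l1 v = l2 v"
  shows "B1 = B2"
proof (rule spinc_eq_if_agree_off_trivial_class[OF triv _ B1(1,2) B2(1,2)])
  show "(0,0) \<in> sf_verts k cs"
    by (simp add: sf_verts_def)
  fix v :: "nat \<times> nat" assume "v \<noteq> (0,0)"
  show "l1 v = l2 v"
  proof (cases "v \<in> sf_verts k cs")
    case False
    then show ?thesis
      using spinc_eq_spinc_coset(2)[OF B1(1,2)] spinc_eq_spinc_coset(2)[OF B2(1,2)]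
      by (simp add: lat_def del: split_paired_All)
  next
    case True
    then show ?thesis
      using ends zcoef_sf_nonzero_imp[OF B1(3) True \<open>v \<noteq> (0,0)\<close>]
        zcoef_sf_nonzero_imp[OF B2(3) True \<open>v \<noteq> (0,0)\<close>]
      by auto
  qed
qed

theorem corollary4p2:
  fixes b :: int and k :: nat and a bb :: "nat \<Rightarrow> int" and cs :: "nat \<Rightarrow> int list"
  assumes "k \<ge> 3"
    and "\<forall>j\<in>{1..k}. 0 < bb j \<and> bb j < a j \<and> coprime (a j) (bb j)"
    and "\<forall>j\<in>{1..k}. cs j \<noteq> [] \<and> (\<forall>c\<in>set (cs j). c \<ge> 2) \<and>
                     hj_val (cs j) = of_int (a j) / of_int (bb j)"
    and "neg_definite (sf_verts k cs) (sf_mat b k cs)"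
    and "Z2_homology_sphere (sf_verts k cs) (sf_mat b k cs)"
    and "class_trivial (sf_verts k cs) (sf_mat b k cs) (0,0)"
  shows "finite {B \<in> spinc (sf_verts k cs) (sf_mat b k cs) (sf_deg k cs).
                   Zhat (sf_verts k cs) (sf_mat b k cs) (sf_deg k cs) B \<noteq> (\<lambda>_. 0)}
       \<and> card {B \<in> spinc (sf_verts k cs) (sf_mat b k cs) (sf_deg k cs).
                   Zhat (sf_verts k cs) (sf_mat b k cs) (sf_deg k cs) B \<noteq> (\<lambda>_. 0)} \<le> 2 ^ k"
proof -
  define V M \<delta> L where "V = sf_verts k cs" and "M = sf_mat b k cs" and "\<delta> = sf_deg k cs"
    and "L = sf_leg_ends k cs"
  define NZ where "NZ = {B \<in> spinc V M \<delta>. Zhat V M \<delta> B \<noteq> (\<lambda>_. 0)}"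
  define rep where "rep B = (SOME l. l \<in> B \<and> zcoef V \<delta> l \<noteq> 0)" for B
  have rep: "B \<in> spinc V M \<delta> \<and> rep B \<in> B \<and> zcoef V \<delta> (rep B) \<noteq> 0" if "B \<in> NZ" for B
    using that Zhat_nonzero_imp_zcoef_nonzero[of V M \<delta> B] someI[of "\<lambda>l. l \<in> B \<and> zcoef V \<delta> l \<noteq> 0"]
    unfolding NZ_def rep_def by blast
  have inj: "inj_on (\<lambda>B. restrict (rep B) L) NZ"
  proof (rule inj_onI)
    fix B1 B2 assume B: "B1 \<in> NZ" "B2 \<in> NZ" "restrict (rep B1) L = restrict (rep B2) L"
    then have "\<forall>v\<in>L. rep B1 v = rep B2 v"
      by (metis restrict_apply')
    then show "B1 = B2"
      using sf_spinc_determined_by_leg_ends[OF assms(6)] rep[OF B(1)] rep[OF B(2)]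
      unfolding V_def M_def \<delta>_def L_def by blast
  qed
  have signs: "(\<lambda>B. restrict (rep B) L) ` NZ \<subseteq> PiE L (\<lambda>_. {1, -1})"
    using rep zcoef_sf_nonzero_imp sf_leg_ends_subset assms(3)
    unfolding V_def \<delta>_def L_def by (fastforce simp: PiE_def)
  have "finite L"
    by (simp add: L_def sf_leg_ends_def)
  then have "finite (PiE L (\<lambda>_. {1, -1::int}))" "card (PiE L (\<lambda>_. {1, -1::int})) = 2 ^ k"
    by (simp_all add: finite_PiE card_PiE L_def card_sf_leg_ends numeral_2_eq_2)
  then show ?thesis
    using finite_imageD[OF finite_subset[OF signs] inj] card_inj_on_le[OF inj signs]
    unfolding NZ_def V_def M_def \<delta>_def by simp
qed

end
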